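(* Let $K$ be a field. For $n\ge 1$ let $A_n \subset K[a_g^{(i)} : g \in \mathbb{Z}_2, i = 1,\dots,n+1]$ be the $K$-subalgebra $$A_n := K\big[a_{g_1}^{(1)}a_{g_2}^{(2)}\cdots a_{g_n}^{(n)}a_{g_1+g_2+\cdots+g_n}^{(n+1)} : g_1,\dots,g_n \in \mathbb{Z}_2\big],$$ graded by giving each variable $a_g^{(i)}$ degree one (so $A_n$ is generated by $2^n$ monomials of degree $n+1$). Then for every $n \geq 2$, $$\dim_K [A_n]_{2(n+1)} = \dim_K [A_{n-1}]_{2n} + 3^n - 2^{n-1}.$$
   Context: $\mathbb{Z}_2=\{0,1\}$ is the group of integers modulo $2$; the sums $g_1+\cdots+g_n$ are taken in $\mathbb{Z}_2$. $[A]_d$ denotes the homogeneous component of degree $d$. *)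

theory Defs
  imports "HOL-Analysis.Analysis" "HOL-Library.Poly_Mapping"
begin

text \<open>Variables a_g^(i) are encoded as pairs (i, g) with g :: bool representing Z_2
 (False = 0, True = 1; addition in Z_2 is exclusive or).\<close>

type_synonym 'k zpoly = "((nat \<times> bool) \<Rightarrow>\<^sub>0 nat) \<Rightarrow>\<^sub>0 'k"

definition kscale :: "'k::field \<Rightarrow> 'k zpoly \<Rightarrow> 'k zpoly" where
  "kscale c p = Poly_Mapping.single 0 c * p"

definition zsum :: "bool list \<Rightarrow> bool" where
  "zsum gs = foldr (\<lambda>a b. a \<noteq> b) gs False"

definition gen_mon :: "bool list \<Rightarrow> (nat \<times> bool) \<Rightarrow>\<^sub>0 nat" where
  "gen_mon gs = (\<Sum>i<length gs. Poly_Mapping.single (i + 1, gs ! i) 1)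
                 + Poly_Mapping.single (length gs + 1, zsum gs) 1"

definition gens :: "nat \<Rightarrow> 'k::field zpoly set" where
  "gens n = {Poly_Mapping.single (gen_mon gs) 1 | gs. length gs = n}"

definition A_alg :: "nat \<Rightarrow> 'k::field zpoly set" where
  "A_alg n = module.span kscale {prod_list ps | ps. set ps \<subseteq> gens n}"

definition mdeg :: "((nat \<times> bool) \<Rightarrow>\<^sub>0 nat) \<Rightarrow> nat" where
  "mdeg m = (\<Sum>v\<in>Poly_Mapping.keys m. Poly_Mapping.lookup m v)"

definition homog :: "nat \<Rightarrow> 'k::field zpoly set" where
  "homog d = {p. \<forall>m\<in>Poly_Mapping.keys p. mdeg m = d}"

definition dim_comp :: "'k::field itself \<Rightarrow> nat \<Rightarrow> nat \<Rightarrow> nat" where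
  "dim_comp _ n d = vector_space.dim (kscale :: 'k \<Rightarrow> 'k zpoly \<Rightarrow> 'k zpoly) (A_alg n \<inter> homog d)"

end

theory Submission
  imports Defs
begin

text \<open>The component $[A_n]_{2(n+1)}$ is spanned by the products of two generators, and
  these are monomials, so its dimension is the number of distinct such products. The product
  of the generators for $g$ and $h$ is determined by its exponents of the variables
  $a_1^{(i)}$: for $i \le n$ the number $c_i \in \{0,1,2\}$ of ones among $g_i, h_i$, and for
  $i = n + 1$ the number $e$ of ones among $\sum g$ and $\sum h$. For fixed
  $c \in \{0,1,2\}^n$ the attainable values of $e$ form a set obeying a simple recursion
  in $c$, and counting along this recursion gives
  $2 \dim [A_n]_{2(n+1)} = 3^{n+1} + 1 - 2^{n+1}$.\<close>

section \<open>The monomial basis\<close>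

lemma lookup_kscale: "Poly_Mapping.lookup (kscale c p) m = c * Poly_Mapping.lookup p m"
  unfolding kscale_def mult_map_scale_conv_mult[symmetric]
  by transfer (simp add: when_def)

interpretation kv: vector_space "kscale :: 'k::field \<Rightarrow> 'k zpoly \<Rightarrow> 'k zpoly"
  by unfold_locales
    (simp_all add: kscale_def distrib_left distrib_right single_add mult.assoc[symmetric] mult_single)

definition mon :: "((nat \<times> bool) \<Rightarrow>\<^sub>0 nat) \<Rightarrow> 'k::field zpoly" where
  "mon m = Poly_Mapping.single m 1"

lemma mon_eq_iff [simp]: "(mon a :: 'k::field zpoly) = mon b \<longleftrightarrow> a = b"
  unfolding mon_def by (metis lookup_single_eq lookup_single_not_eq one_neq_zero)

lemma lookup_mon: "Poly_Mapping.lookup (mon a :: 'k::field zpoly) b = of_bool (a = b)"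
  by (simp add: mon_def lookup_single)

lemma prod_list_map_mon: "prod_list (map mon ms) = (mon (sum_list ms) :: 'k::field zpoly)"
  by (induction ms) (simp_all add: mon_def mult_single)

lemma sum_keys_mon:
  "(\<Sum>m\<in>Poly_Mapping.keys p. kscale (Poly_Mapping.lookup p m) (mon m)) = (p :: 'k::field zpoly)"
  by (rule poly_mapping_eqI)
    (auto simp: lookup_sum lookup_kscale lookup_mon in_keys_iff Int_insert_right)

lemma span_mon_image: "kv.span (mon ` S :: 'k::field zpoly set) = {p. Poly_Mapping.keys p \<subseteq> S}"
proof (intro equalityI subsetI)
  let ?K = "{p :: 'k zpoly. Poly_Mapping.keys p \<subseteq> S}"
  have "kv.subspace ?K"
  proof (rule kv.subspaceI)
    show "x + y \<in> ?K" if "x \<in> ?K" "y \<in> ?K" for x y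
      using that keys_add[of x y] by blast
    show "kscale c x \<in> ?K" if "x \<in> ?K" for c x
      using that by (auto simp: in_keys_iff lookup_kscale)
  qed simp
  moreover have "mon ` S \<subseteq> ?K"
    by (auto simp: mon_def)
  ultimately show "p \<in> ?K" if "p \<in> kv.span (mon ` S)" for p
    using that kv.span_minimal by blast
next
  fix p :: "'k zpoly"
  assume "p \<in> {p. Poly_Mapping.keys p \<subseteq> S}"
  then have "(\<Sum>m\<in>Poly_Mapping.keys p. kscale (Poly_Mapping.lookup p m) (mon m)) \<in> kv.span (mon ` S)"
    by (intro kv.span_sum kv.span_scale kv.span_base) auto
  then show "p \<in> kv.span (mon ` S)"
    by (simp only: sum_keys_mon)
qed

lemma independent_mon_image: "kv.independent (mon ` S :: 'k::field zpoly set)"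
  unfolding kv.independent_explicit_module
proof (intro allI impI)
  fix t u and v :: "'k zpoly"
  assume t: "finite t" "t \<subseteq> mon ` S" and lin: "(\<Sum>w\<in>t. kscale (u w) w) = 0" and "v \<in> t"
  then obtain m where v: "v = mon m" by blast
  have "u w * Poly_Mapping.lookup w m = (if w = v then u v else 0)" if "w \<in> t" for w
    using that t(2) by (auto simp: v lookup_mon)
  then have "(\<Sum>w\<in>t. u w * Poly_Mapping.lookup w m) = u v"
    using t(1) \<open>v \<in> t\<close> by (simp add: sum.cong[OF refl])
  moreover have "(\<Sum>w\<in>t. u w * Poly_Mapping.lookup w m) = 0"
    using arg_cong[OF lin, of "\<lambda>p. Poly_Mapping.lookup p m"] by (simp add: lookup_sum lookup_kscale)
  ultimately show "u v = 0" by simp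
qed

lemma dim_span_mon_image: "kv.dim (kv.span (mon ` S :: 'k::field zpoly set)) = card S"
proof -
  have "kv.dim (kv.span (mon ` S :: 'k zpoly set)) = card (mon ` S :: 'k zpoly set)"
    by (rule kv.dim_span_eq_card_independent[OF independent_mon_image])
  also have "\<dots> = card S"
    by (rule card_image) (auto simp: inj_on_def)
  finally show ?thesis .
qed

section \<open>The degree 2(n+1) component as a span of monomials\<close>

lemma mdeg_add: "mdeg (a + b) = mdeg a + mdeg b"
proof -
  let ?F = "Poly_Mapping.keys a \<union> Poly_Mapping.keys b"
  have mdeg_on: "mdeg m = (\<Sum>v\<in>?F. Poly_Mapping.lookup m v)" if "Poly_Mapping.keys m \<subseteq> ?F" for m
    unfolding mdeg_def using that by (intro sum.mono_neutral_left) (auto simp: in_keys_iff)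
  have "mdeg (a + b) = (\<Sum>v\<in>?F. Poly_Mapping.lookup a v) + (\<Sum>v\<in>?F. Poly_Mapping.lookup b v)"
    by (simp add: mdeg_on keys_add lookup_add sum.distrib)
  then show ?thesis
    by (simp add: mdeg_on)
qed

lemma mdeg_zero [simp]: "mdeg 0 = 0"
  by (simp add: mdeg_def)

lemma mdeg_single [simp]: "mdeg (Poly_Mapping.single v k) = k"
  by (simp add: mdeg_def)

lemma mdeg_sum: "mdeg (sum f A) = (\<Sum>a\<in>A. mdeg (f a))"
  by (induction A rule: infinite_finite_induct) (simp_all add: mdeg_add)

lemma mdeg_gen_mon: "mdeg (gen_mon gs) = length gs + 1"
  by (simp add: gen_mon_def mdeg_add mdeg_sum)

lemma mdeg_sum_list_gen_mon:
  "\<forall>gs\<in>set gss. length gs = n \<Longrightarrow> mdeg (sum_list (map gen_mon gss)) = length gss * (n + 1)"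
  by (induction gss) (simp_all add: mdeg_add mdeg_gen_mon)

definition gen_products :: "nat \<Rightarrow> ((nat \<times> bool) \<Rightarrow>\<^sub>0 nat) set" where
  "gen_products n = (\<lambda>gss. sum_list (map gen_mon gss)) ` lists {gs. length gs = n}"

definition gen_pair_products :: "nat \<Rightarrow> ((nat \<times> bool) \<Rightarrow>\<^sub>0 nat) set" where
  "gen_pair_products n = {gen_mon gs + gen_mon hs | gs hs. length gs = n \<and> length hs = n}"

lemma prod_lists_of_gens:
  "{prod_list ps | ps. set ps \<subseteq> (gens n :: 'k::field zpoly set)} = mon ` gen_products n"
proof -
  have gens: "gens n = (mon \<circ> gen_mon) ` {gs. length gs = n}"
    by (auto simp: gens_def mon_def)
  have "{prod_list ps | ps. set ps \<subseteq> (gens n :: 'k zpoly set)}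
      = prod_list ` lists ((mon \<circ> gen_mon) ` {gs. length gs = n})"
    unfolding gens by (simp add: lists_eq_set setcompr_eq_image)
  also have "\<dots> = prod_list ` map (mon \<circ> gen_mon) ` lists {gs. length gs = n}"
    by (simp only: lists_image)
  also have "\<dots> = mon ` gen_products n"
    by (simp add: gen_products_def image_image prod_list_map_mon[symmetric])
  finally show ?thesis .
qed

lemma gen_products_of_mdeg: "gen_products n \<inter> {m. mdeg m = 2 * (n + 1)} = gen_pair_products n"
proof (intro equalityI subsetI)
  fix m assume "m \<in> gen_products n \<inter> {m. mdeg m = 2 * (n + 1)}"
  then obtain gss where m: "m = sum_list (map gen_mon gss)" and gss: "\<forall>gs\<in>set gss. length gs = n"
    and "mdeg m = 2 * (n + 1)"
    by (auto simp: gen_products_def in_lists_conv_set)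
  then have "length gss * (n + 1) = 2 * (n + 1)"
    using mdeg_sum_list_gen_mon[OF gss] by simp
  then have "length gss = 2"
    using mult_right_cancel[of "n + 1" "length gss" 2] by simp
  then obtain gs hs where "gss = [gs, hs]"
    by (auto simp: length_Suc_conv numeral_2_eq_2)
  then show "m \<in> gen_pair_products n"
    using m gss by (auto simp: gen_pair_products_def)
next
  fix m assume "m \<in> gen_pair_products n"
  then obtain gs hs where "m = gen_mon gs + gen_mon hs" "length gs = n" "length hs = n"
    by (auto simp: gen_pair_products_def)
  then show "m \<in> gen_products n \<inter> {m. mdeg m = 2 * (n + 1)}"
    unfolding gen_products_def
    by (auto simp: mdeg_add mdeg_gen_mon intro!: image_eqI[of _ _ "[gs, hs]"])
qed

lemma dim_comp_eq_card_gen_pair_products: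
  "dim_comp TYPE('k::field) n (2 * (n + 1)) = card (gen_pair_products n)"
proof -
  have component: "A_alg n \<inter> homog (2 * (n + 1)) = (kv.span (mon ` gen_pair_products n) :: 'k zpoly set)"
    unfolding A_alg_def prod_lists_of_gens span_mon_image gen_products_of_mdeg[symmetric] homog_def
    by auto
  show ?thesis
    unfolding dim_comp_def component by (rule dim_span_mon_image)
qed

section \<open>Profiles of products of two generators\<close>

lemma zsum_Nil [simp]: "zsum [] = False"
  by (simp add: zsum_def)

lemma zsum_Cons [simp]: "zsum (g # gs) = (g \<noteq> zsum gs)"
  by (simp add: zsum_def)

lemma lookup_gen_mon:
  "Poly_Mapping.lookup (gen_mon gs) (j, b) =
    (if 0 < j \<and> j \<le> length gs then of_bool (gs ! (j - 1) = b)
     else of_bool (j = length gs + 1 \<and> zsum gs = b))"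
proof -
  have "(\<Sum>i<length gs. Poly_Mapping.lookup (Poly_Mapping.single (i + 1, gs ! i) 1) (j, b))
      = (\<Sum>i<length gs. if i = j - 1 then of_bool (0 < j \<and> gs ! (j - 1) = b) else 0)"
    by (intro sum.cong) (auto simp: lookup_single when_def)
  also have "\<dots> = of_bool (0 < j \<and> j \<le> length gs \<and> gs ! (j - 1) = b)"
    by (subst sum.delta) auto
  finally have coords: "(\<Sum>i<length gs. Poly_Mapping.lookup (Poly_Mapping.single (i + 1, gs ! i) 1) (j, b))
      = of_bool (0 < j \<and> j \<le> length gs \<and> gs ! (j - 1) = b)" .
  show ?thesis
    unfolding gen_mon_def lookup_add lookup_sum coords by (auto simp: lookup_single when_def)
qed

definition pair_count :: "bool \<Rightarrow> bool \<Rightarrow> bool \<Rightarrow> nat" where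
  "pair_count b g h = of_bool (g = b) + of_bool (h = b)"

lemma pair_count_True_simps:
  "pair_count True False False = 0" "pair_count True True False = 1"
  "pair_count True False True = 1" "pair_count True True True = 2"
  by (simp_all add: pair_count_def)

lemma pair_count_True_not: "pair_count True (\<not> s) (\<not> t) = 2 - pair_count True s t"
  by (cases s; cases t) (simp_all add: pair_count_True_simps)

lemma pair_count_True_eq_1: "pair_count True g h = 1 \<longleftrightarrow> g \<noteq> h"
  by (cases g; cases h) (simp_all add: pair_count_def)

lemma pair_count_eqI:
  "pair_count True g h = pair_count True g' h' \<Longrightarrow> pair_count b g h = pair_count b g' h'"
  by (cases b; cases g; cases h; cases g'; cases h') (simp_all add: pair_count_def)

lemma lookup_gen_pair:
  assumes "length gs = n" "length hs = n"
  shows "Poly_Mapping.lookup (gen_mon gs + gen_mon hs) (j, b) =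
    (if 0 < j \<and> j \<le> n then pair_count b (gs ! (j - 1)) (hs ! (j - 1))
     else if j = n + 1 then pair_count b (zsum gs) (zsum hs) else 0)"
  using assms by (simp add: lookup_add lookup_gen_mon pair_count_def)

definition profile :: "nat \<Rightarrow> ((nat \<times> bool) \<Rightarrow>\<^sub>0 nat) \<Rightarrow> nat list \<times> nat" where
  "profile n m =
    (map (\<lambda>i. Poly_Mapping.lookup m (Suc i, True)) [0..<n], Poly_Mapping.lookup m (Suc n, True))"

definition profiles :: "nat \<Rightarrow> (nat list \<times> nat) set" where
  "profiles n = {(map2 (pair_count True) gs hs, pair_count True (zsum gs) (zsum hs))
                  | gs hs. length gs = n \<and> length hs = n}"

lemma profilesI:
  "length gs = n \<Longrightarrow> length hs = n \<Longrightarrow>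
    (map2 (pair_count True) gs hs, pair_count True (zsum gs) (zsum hs)) \<in> profiles n"
  by (auto simp: profiles_def)

lemma profilesE:
  assumes "(c, e) \<in> profiles n"
  obtains gs hs where "length gs = n" "length hs = n" "c = map2 (pair_count True) gs hs"
    "e = pair_count True (zsum gs) (zsum hs)"
  using assms by (auto simp: profiles_def)

lemma Cons_profilesI:
  "length gs = n \<Longrightarrow> length hs = n \<Longrightarrow>
    (pair_count True g h # map2 (pair_count True) gs hs,
     pair_count True (g \<noteq> zsum gs) (h \<noteq> zsum hs)) \<in> profiles (Suc n)"
  using profilesI[of "g # gs" "Suc n" "h # hs"] by simp

lemma profile_gen_pair:
  assumes "length gs = n" "length hs = n"
  shows "profile n (gen_mon gs + gen_mon hs) =
    (map2 (pair_count True) gs hs, pair_count True (zsum gs) (zsum hs))"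
  using assms by (auto simp: profile_def lookup_gen_pair intro!: nth_equalityI)

lemma profile_image: "profile n ` gen_pair_products n = profiles n"
  unfolding gen_pair_products_def profiles_def by (force simp: profile_gen_pair)

text \<open>Away from the coordinates recorded by the profile the exponents are $0$, or
  $2$ minus a recorded one, so the profile determines the monomial.\<close>

lemma inj_on_profile: "inj_on (profile n) (gen_pair_products n)"
proof (rule inj_onI)
  fix m m'
  assume "m \<in> gen_pair_products n" "m' \<in> gen_pair_products n" and eq: "profile n m = profile n m'"
  then obtain gs hs gs' hs' where m: "m = gen_mon gs + gen_mon hs" "length gs = n" "length hs = n"
    and m': "m' = gen_mon gs' + gen_mon hs'" "length gs' = n" "length hs' = n"
    by (auto simp: gen_pair_products_def)
  have coords: "pair_count True (gs ! i) (hs ! i) = pair_count True (gs' ! i) (hs' ! i)" if "i < n" for i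
    using arg_cong[OF eq, of "\<lambda>p. fst p ! i"] that m m' by (simp add: profile_gen_pair)
  have sums: "pair_count True (zsum gs) (zsum hs) = pair_count True (zsum gs') (zsum hs')"
    using arg_cong[OF eq, of snd] m m' by (simp add: profile_gen_pair)
  show "m = m'"
  proof (rule poly_mapping_eqI)
    fix k :: "nat \<times> bool"
    show "Poly_Mapping.lookup m k = Poly_Mapping.lookup m' k"
      using coords[of "fst k - 1"] sums m m'
      by (cases k) (auto simp: lookup_gen_pair intro: pair_count_eqI)
  qed
qed

section \<open>The attainable profiles\<close>

definition ternary :: "nat \<Rightarrow> nat list set" where
  "ternary n = {xs. set xs \<subseteq> {0, 1, 2} \<and> length xs = n}"

lemma one_mem_reflect_iff: "1 \<in> (\<lambda>e. 2 - e) ` A \<longleftrightarrow> 1 \<in> (A :: nat set)"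
proof
  assume "1 \<in> (\<lambda>e. 2 - e) ` A"
  then obtain e where "e \<in> A" "1 = 2 - e"
    by auto
  then have "e = 1"
    by arith
  with \<open>e \<in> A\<close> show "1 \<in> A"
    by simp
next
  assume "1 \<in> A"
  then show "1 \<in> (\<lambda>e. 2 - e) ` A"
    by (rule rev_image_eqI) simp
qed

text \<open>\<open>sum_counts c\<close> is the set of second components of the profiles with first component
  \<open>c\<close> (\<open>profiles_eq_Sigma\<close>). A new coordinate with count $0$ or $2$ leaves both sums alone
  or flips both ($e \mapsto 2 - e$); count $1$ flips exactly one of them, which merges them if
  they differed and separates them otherwise.\<close>

fun sum_counts :: "nat list \<Rightarrow> nat set" where
  "sum_counts [] = {0}"
| "sum_counts (x # c) =
    (if x = 0 then sum_counts c
     else if x = 2 then (\<lambda>e. 2 - e) ` sum_counts c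
     else if 1 \<in> sum_counts c then {0, 2} else {1})"

lemma sum_counts_subset: "sum_counts c \<subseteq> {0, 1, 2}"
  by (induction c) auto

lemma sum_counts_nonempty: "sum_counts c \<noteq> {}"
  by (induction c) auto

lemma sum_counts_one: "1 \<in> sum_counts c \<Longrightarrow> sum_counts c = {1}"
proof (induction c)
  case (Cons x c)
  then show ?case
    using one_mem_reflect_iff[of "sum_counts c"] by (auto split: if_splits)
qed simp

lemma one_mem_sum_counts_iff:
  assumes e: "pair_count True s t \<in> sum_counts c"
  shows "1 \<in> sum_counts c \<longleftrightarrow> s \<noteq> t"
proof
  assume "1 \<in> sum_counts c"
  then have "sum_counts c = {1}"
    by (rule sum_counts_one)
  with e show "s \<noteq> t"
    using pair_count_True_eq_1[of s t] by simp
next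
  assume "s \<noteq> t"
  then have "pair_count True s t = 1"
    using pair_count_True_eq_1 by blast
  with e show "1 \<in> sum_counts c"
    by simp
qed

lemma pair_count_flip_mem_sum_counts:
  assumes st: "pair_count True s t \<in> sum_counts c"
  shows "pair_count True (g \<noteq> s) (h \<noteq> t) \<in> sum_counts (pair_count True g h # c)"
proof -
  consider "\<not> g" "\<not> h" | "g" "h" | "g \<noteq> h"
    by blast
  then show ?thesis
  proof cases
    case 1
    then show ?thesis
      using st by (simp add: pair_count_True_simps)
  next
    case 2
    have "2 - pair_count True s t \<in> (\<lambda>e. 2 - e) ` sum_counts c"
      using st by (rule imageI)
    then show ?thesis
      using 2 by (simp add: pair_count_True_simps pair_count_True_not)
  next
    case 3
    have "1 \<in> sum_counts c \<longleftrightarrow> s \<noteq> t"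
      using st by (rule one_mem_sum_counts_iff)
    with 3 show ?thesis
      by (cases g; cases s; cases t) (simp_all add: pair_count_def)
  qed
qed

lemma profiles_Suc_subset:
  assumes IH: "profiles n = Sigma (ternary n) sum_counts"
  shows "profiles (Suc n) \<subseteq> Sigma (ternary (Suc n)) sum_counts"
proof
  fix p assume "p \<in> profiles (Suc n)"
  then obtain gs' hs'
    where p': "p = (map2 (pair_count True) gs' hs', pair_count True (zsum gs') (zsum hs'))"
    and "length gs' = Suc n" "length hs' = Suc n"
    by (auto simp: profiles_def)
  then obtain g gs h hs where gs: "gs' = g # gs" "hs' = h # hs" "length gs = n" "length hs = n"
    by (metis length_Suc_conv)
  let ?c = "map2 (pair_count True) gs hs"
  have p: "p = (pair_count True g h # ?c, pair_count True (g \<noteq> zsum gs) (h \<noteq> zsum hs))"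
    by (simp add: p' gs)
  have "(?c, pair_count True (zsum gs) (zsum hs)) \<in> profiles n"
    using gs by (simp add: profilesI)
  then have c: "?c \<in> ternary n" and e: "pair_count True (zsum gs) (zsum hs) \<in> sum_counts ?c"
    unfolding IH by simp_all
  from e have
    "pair_count True (g \<noteq> zsum gs) (h \<noteq> zsum hs) \<in> sum_counts (pair_count True g h # ?c)"
    by (rule pair_count_flip_mem_sum_counts)
  moreover have "pair_count True g h # ?c \<in> ternary (Suc n)"
    using c by (simp add: ternary_def pair_count_def)
  ultimately show "p \<in> Sigma (ternary (Suc n)) sum_counts"
    by (simp add: p)
qed

lemma Cons_1_mem_profiles:
  assumes realize: "\<And>e. e \<in> sum_counts c \<Longrightarrow> (c, e) \<in> profiles n"
    and e': "e' \<in> sum_counts (1 # c)"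
  shows "(1 # c, e') \<in> profiles (Suc n)"
proof -
  obtain e where "e \<in> sum_counts c"
    using sum_counts_nonempty by blast
  then obtain gs hs where gs: "length gs = n" "length hs = n" "c = map2 (pair_count True) gs hs"
    and e: "e = pair_count True (zsum gs) (zsum hs)"
    using realize profilesE by metis
  have "1 \<in> sum_counts c \<longleftrightarrow> zsum gs \<noteq> zsum hs"
    using \<open>e \<in> sum_counts c\<close> unfolding e by (rule one_mem_sum_counts_iff)
  then have "e' = pair_count True (\<not> zsum gs) (zsum hs) \<or> e' = pair_count True (zsum gs) (\<not> zsum hs)"
    using e' by (cases "zsum gs"; cases "zsum hs") (auto simp: pair_count_def)
  then show ?thesis
    using Cons_profilesI[OF gs(1,2), of True False] Cons_profilesI[OF gs(1,2), of False True] gs(3)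
    by (auto simp: pair_count_True_simps)
qed

lemma profiles_Suc_supset:
  assumes IH: "profiles n = Sigma (ternary n) sum_counts"
  shows "Sigma (ternary (Suc n)) sum_counts \<subseteq> profiles (Suc n)"
proof
  fix p assume "p \<in> Sigma (ternary (Suc n)) sum_counts"
  then obtain x c e' where p: "p = (x # c, e')" and x: "x \<in> {0, 1, 2}" and "c \<in> ternary n"
    and e': "e' \<in> sum_counts (x # c)"
    by (auto simp: ternary_def length_Suc_conv)
  have realize: "(c, e) \<in> profiles n" if "e \<in> sum_counts c" for e
    using that \<open>c \<in> ternary n\<close> IH by simp
  consider "x = 0" | "x = 2" | "x = 1"
    using x by auto
  then show "p \<in> profiles (Suc n)"
  proof cases
    case 1
    with e' have "(c, e') \<in> profiles n"
      by (simp add: realize)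
    then obtain gs hs where "length gs = n" "length hs = n" "c = map2 (pair_count True) gs hs"
      "e' = pair_count True (zsum gs) (zsum hs)"
      by (rule profilesE)
    then show ?thesis
      using Cons_profilesI[of gs n hs False False] 1 by (simp add: p pair_count_True_simps)
  next
    case 2
    with e' obtain e where "e \<in> sum_counts c" "e' = 2 - e"
      by auto
    then obtain gs hs where "length gs = n" "length hs = n" "c = map2 (pair_count True) gs hs"
      "e' = 2 - pair_count True (zsum gs) (zsum hs)"
      using realize profilesE by metis
    then show ?thesis
      using Cons_profilesI[of gs n hs True True] 2
      by (simp add: p pair_count_True_not pair_count_True_simps)
  next
    case 3
    with e' show ?thesis
      using Cons_1_mem_profiles[OF realize] by (simp add: p)
  qed
qed

lemma profiles_eq_Sigma: "profiles n = Sigma (ternary n) sum_counts"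
proof (induction n)
  case 0
  show ?case
    by (auto simp: profiles_def ternary_def pair_count_def)
next
  case (Suc n)
  then show ?case
    using profiles_Suc_subset profiles_Suc_supset by blast
qed

section \<open>Counting the profiles\<close>

lemma finite_ternary: "finite (ternary n)"
  unfolding ternary_def by (rule finite_lists_length_eq) simp

lemma card_ternary: "card (ternary n) = 3 ^ n"
  unfolding ternary_def by (subst card_lists_length_eq) (simp_all add: numeral_3_eq_3)

lemma ternary_0: "ternary 0 = {[]}"
  by (auto simp: ternary_def)

lemma sum_ternary_Suc:
  "(\<Sum>c\<in>ternary (Suc n). f c) = (\<Sum>c\<in>ternary n. f (0 # c) + f (1 # c) + f (2 # c))"
proof -
  have "ternary (Suc n) = (\<lambda>(c, x). x # c) ` (ternary n \<times> {0, 1, 2})"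
    unfolding ternary_def by (rule lists_length_Suc_eq)
  moreover have "inj_on (\<lambda>(c, x). x # c) (ternary n \<times> {0, 1, 2})"
    by (auto simp: inj_on_def)
  ultimately have "(\<Sum>c\<in>ternary (Suc n). f c) = (\<Sum>(c, x)\<in>ternary n \<times> {0, 1, 2}. f (x # c))"
    by (simp add: sum.reindex case_prod_unfold)
  also have "\<dots> = (\<Sum>c\<in>ternary n. \<Sum>x\<in>{0, 1, 2}. f (x # c))"
    by (rule sum.cartesian_product[symmetric])
  finally show ?thesis
    by (simp add: add.assoc)
qed

lemma card_sum_counts_two: "card (sum_counts (2 # c)) = card (sum_counts c)"
proof -
  have inj: "inj_on (\<lambda>e. 2 - e) (sum_counts c)"
  proof (rule inj_onI)
    fix x y assume "x \<in> sum_counts c" "y \<in> sum_counts c" "2 - x = 2 - y"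
    moreover have "x \<le> 2" "y \<le> 2"
      using \<open>x \<in> sum_counts c\<close> \<open>y \<in> sum_counts c\<close> sum_counts_subset[of c] by auto
    ultimately show "x = y"
      by arith
  qed
  show ?thesis
    using card_image[OF inj] by simp
qed

lemma one_mem_sum_counts_step:
  "of_bool (1 \<in> sum_counts (0 # c)) + of_bool (1 \<in> sum_counts (1 # c)) + of_bool (1 \<in> sum_counts (2 # c))
    = 1 + (of_bool (1 \<in> sum_counts c) :: nat)"
proof -
  have "sum_counts (2 # c) = (\<lambda>e. 2 - e) ` sum_counts c"
    by simp
  then have "1 \<in> sum_counts (2 # c) \<longleftrightarrow> 1 \<in> sum_counts c"
    by (simp only: one_mem_reflect_iff)
  then show ?thesis
    by (cases "1 \<in> sum_counts c") simp_all
qed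

lemma card_sum_counts_step:
  "card (sum_counts (0 # c)) + card (sum_counts (1 # c)) + card (sum_counts (2 # c))
    = 1 + of_bool (1 \<in> sum_counts c) + 2 * card (sum_counts c)"
  using card_sum_counts_two[of c] by simp

lemma sum_one_mem_sum_counts: "2 * (\<Sum>c\<in>ternary n. of_bool (1 \<in> sum_counts c)) + 1 = (3 :: nat) ^ n"
proof (induction n)
  case (Suc n)
  have "(\<Sum>c\<in>ternary (Suc n). of_bool (1 \<in> sum_counts c))
      = (\<Sum>c\<in>ternary n. 1 + of_bool (1 \<in> sum_counts c) :: nat)"
    unfolding sum_ternary_Suc by (intro sum.cong refl one_mem_sum_counts_step)
  also have "\<dots> = 3 ^ n + (\<Sum>c\<in>ternary n. of_bool (1 \<in> sum_counts c))"
    by (subst sum.distrib) (simp add: card_ternary)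
  finally show ?case
    using Suc.IH by simp
qed (simp add: ternary_0)

lemma sum_card_sum_counts:
  "2 * (\<Sum>c\<in>ternary n. card (sum_counts c)) + 2 ^ (n + 1) = 3 ^ (n + 1) + 1"
proof (induction n)
  case (Suc n)
  have "(\<Sum>c\<in>ternary (Suc n). card (sum_counts c))
      = (\<Sum>c\<in>ternary n. 1 + of_bool (1 \<in> sum_counts c) + 2 * card (sum_counts c))"
    unfolding sum_ternary_Suc by (intro sum.cong refl card_sum_counts_step)
  also have "\<dots> = 3 ^ n + (\<Sum>c\<in>ternary n. of_bool (1 \<in> sum_counts c))
      + 2 * (\<Sum>c\<in>ternary n. card (sum_counts c))"
    by (subst sum.distrib)+ (simp add: sum_distrib_left card_ternary)
  finally show ?case
    using Suc.IH sum_one_mem_sum_counts[of n] by simp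
qed (simp add: ternary_0)

lemma dim_comp_closed_form:
  "2 * dim_comp TYPE('k::field) n (2 * (n + 1)) + 2 ^ (n + 1) = 3 ^ (n + 1) + 1"
proof -
  have "dim_comp TYPE('k) n (2 * (n + 1)) = card (gen_pair_products n)"
    by (rule dim_comp_eq_card_gen_pair_products)
  also have "\<dots> = card (profile n ` gen_pair_products n)"
    by (rule card_image[OF inj_on_profile, symmetric])
  also have "\<dots> = card (Sigma (ternary n) sum_counts)"
    by (simp only: profile_image profiles_eq_Sigma)
  also have "\<dots> = (\<Sum>c\<in>ternary n. card (sum_counts c))"
    using finite_ternary sum_counts_subset by (intro card_SigmaI) (auto intro: finite_subset)
  finally show ?thesis
    using sum_card_sum_counts by simp
qed

theorem lemma3p6:
  fixes n :: nat
  assumes "n \<ge> 2"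
  shows "int (dim_comp TYPE('k::field) n (2 * (n + 1)))
         = int (dim_comp TYPE('k) (n - 1) (2 * n)) + 3 ^ n - 2 ^ (n - 1)"
proof -
  obtain m where n: "n = Suc m"
    using assms by (cases n) auto
  have "2 * int (dim_comp TYPE('k) n (2 * (n + 1))) + 4 * 2 ^ m = 9 * 3 ^ m + 1"
    using arg_cong[OF dim_comp_closed_form[of n, where 'k = 'k], of int] by (simp add: n)
  moreover have "2 * int (dim_comp TYPE('k) (n - 1) (2 * n)) + 2 * 2 ^ m = 3 * 3 ^ m + 1"
    using arg_cong[OF dim_comp_closed_form[of m, where 'k = 'k], of int] by (simp add: n)
  ultimately show ?thesis
    by (simp add: n)
qed

end
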